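(* Let $L$ be a language and suppose that a language $A$ over an alphabet $\Sigma$ is definable by a sentence $\varphi\in Q^{\star}_L\mathrm{FO}$ of the form $Q^\star_L R_1,\dots,R_t[\psi_1,\dots,\psi_{s-1}]$ in which all quantified relation variables $R_i$ have arity $k$. Let $\sharp\notin\Sigma$. Then the language $A^*=\{w\,\sharp^{|w|^k-|w|} : w\in A\}$ over $\Sigma\cup\{\sharp\}$ is definable in $\mathrm{FO}(Q^{\star}_L,+,\times)$.
   Context: Strings as structures: a nonempty string $b_0\cdots b_{n-1}$ over the ordered alphabet $(a_1,\dots,a_s)$ is the structure with universe $\{0,\dots,n-1\}$, natural order $<$, and unary predicates $P_{a_i}=\{j:b_j=a_i\}$. FO uses $=$, $<$, these predicates, $\min,\max$, connectives, $\exists,\forall$; "$+,\times$" means the ternary relations $i+j=k$ and $i\cdot j=k$ are additionally built in. Quantifier $Q^\star_L$ of arity $m\ge1$: for $L$ over $(a_1,\dots,a_s)$ and distinct $m$-ary relation variables $\overline X=(X_1,\dots,X_t)$, over universe $\{0,\dots,n-1\}$ encode $A_i\subseteq\{0,\dots,n-1\}^m$ by the bit string $s^i_0\cdots s^i_{n^m-1}$ with $s^i_j=1$ iff the $j$-th tuple in lexicographic order belongs to $A_i$; order all assignments lexicographically by the concatenated code $s^1_0\cdots s^1_{n^m-1}\cdots s^t_0\cdots s^t_{n^m-1}$. Then $\mathcal A\models Q^\star_L\overline X[\varphi_1,\dots,\varphi_{s-1}]$ iff the word whose $i$-th letter is $a_j$ for the least $j$ with $\varphi_j$ true at the $i$-th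 assignment (and $a_s$ if none) lies in $L$. $Q^\star_L\mathrm{FO}$ consists of formulas $Q^\star_L\overline X[\varphi_1,\dots,\varphi_{s-1}]$, $\overline X$ relation variables of some arity, $\varphi_i$ first-order (only $<$ built in). $\mathrm{FO}(Q^\star_L,+,\times)$ denotes first-order logic with built-in $<,+,\times$, extended by unary second-order variables and closed under application of the monadic ($m=1$) quantifier $Q^\star_L$. *)

theory Defs
  imports Main "HOL-Library.List_Lexorder"
begin

datatype trm = V nat | Mn | Mx

text \<open>One syntax covering both logics.  Q k Xs psis is the quantifier Q*_L applied to the
  distinct k-ary relation variables Xs and formulas psis = psi_1 ... psi_(s-1).\<close>
datatype 'a form =
    Eq trm trm | Less trm trm | Plus trm trm trm | Times trm trm trm
  | Letter 'a trm | Rel nat "trm list"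
  | Neg "'a form" | Conj "'a form" "'a form" | Ex nat "'a form"
  | Q nat "nat list" "'a form list"

fun teval :: "nat \<Rightarrow> (nat \<Rightarrow> nat) \<Rightarrow> trm \<Rightarrow> nat" where
  "teval n \<nu> (V x) = \<nu> x"
| "teval n \<nu> Mn = 0"
| "teval n \<nu> Mx = n - 1"

definition tuples :: "nat \<Rightarrow> nat \<Rightarrow> nat list list" where
  "tuples n k = sorted_list_of_set {xs. length xs = k \<and> set xs \<subseteq> {..<n}}"

text \<open>All bit strings of length m in lexicographic order (False = 0 < True = 1).\<close>
definition codes :: "nat \<Rightarrow> bool list list" where
  "codes m = sorted_list_of_set {c :: bool list. length c = m}"

text \<open>The assignment (A_1,...,A_t) whose concatenated code is c.\<close>
definition decode :: "nat \<Rightarrow> nat \<Rightarrow> nat \<Rightarrow> bool list \<Rightarrow> nat list set list" where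
  "decode n k t c = map (\<lambda>i. {tuples n k ! j | j. j < n ^ k \<and> c ! (i * n ^ k + j)}) [0..<t]"

fun upd :: "(nat \<Rightarrow> nat list set) \<Rightarrow> nat list \<Rightarrow> nat list set list \<Rightarrow> (nat \<Rightarrow> nat list set)" where
  "upd \<rho> (x # xs) (A # As) = (upd \<rho> xs As)(x := A)"
| "upd \<rho> _ _ = \<rho>"

definition choose_letter :: "'b list \<Rightarrow> bool list \<Rightarrow> 'b" where
  "choose_letter bs vs =
     (if \<exists>j < length vs. vs ! j then bs ! (LEAST j. j < length vs \<and> vs ! j) else last bs)"

text \<open>Satisfaction on the string w (universe {0..length w - 1}); bs is the ordered
  alphabet (a_1,...,a_s) of L.\<close>
fun sat :: "'b list \<Rightarrow> 'b list set \<Rightarrow> 'a list \<Rightarrow> (nat \<Rightarrow> nat) \<Rightarrow> (nat \<Rightarrow> nat list set)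
             \<Rightarrow> 'a form \<Rightarrow> bool" where
  "sat bs L w \<nu> \<rho> (Eq s t) = (teval (length w) \<nu> s = teval (length w) \<nu> t)"
| "sat bs L w \<nu> \<rho> (Less s t) = (teval (length w) \<nu> s < teval (length w) \<nu> t)"
| "sat bs L w \<nu> \<rho> (Plus a b c) =
     (teval (length w) \<nu> a + teval (length w) \<nu> b = teval (length w) \<nu> c)"
| "sat bs L w \<nu> \<rho> (Times a b c) =
     (teval (length w) \<nu> a * teval (length w) \<nu> b = teval (length w) \<nu> c)"
| "sat bs L w \<nu> \<rho> (Letter a t) = (w ! teval (length w) \<nu> t = a)"
| "sat bs L w \<nu> \<rho> (Rel r ts) = (map (teval (length w) \<nu>) ts \<in> \<rho> r)"
| "sat bs L w \<nu> \<rho> (Neg \<phi>) = (\<not> sat bs L w \<nu> \<rho> \<phi>)"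
| "sat bs L w \<nu> \<rho> (Conj \<phi> \<psi>) = (sat bs L w \<nu> \<rho> \<phi> \<and> sat bs L w \<nu> \<rho> \<psi>)"
| "sat bs L w \<nu> \<rho> (Ex x \<phi>) = (\<exists>i < length w. sat bs L w (\<nu>(x := i)) \<rho> \<phi>)"
| "sat bs L w \<nu> \<rho> (Q k Xs \<psi>s) =
     (map (\<lambda>c. choose_letter bs
              (map (\<lambda>\<psi>. sat bs L w \<nu> (upd \<rho> Xs (decode (length w) k (length Xs) c)) \<psi>) \<psi>s))
          (codes (length Xs * length w ^ k)) \<in> L)"

fun tvars :: "trm \<Rightarrow> nat set" where
  "tvars (V x) = {x}" | "tvars Mn = {}" | "tvars Mx = {}"

fun fv :: "'a form \<Rightarrow> nat set" where
  "fv (Eq s t) = tvars s \<union> tvars t"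
| "fv (Less s t) = tvars s \<union> tvars t"
| "fv (Plus a b c) = tvars a \<union> tvars b \<union> tvars c"
| "fv (Times a b c) = tvars a \<union> tvars b \<union> tvars c"
| "fv (Letter a t) = tvars t"
| "fv (Rel r ts) = (\<Union>t \<in> set ts. tvars t)"
| "fv (Neg \<phi>) = fv \<phi>"
| "fv (Conj \<phi> \<psi>) = fv \<phi> \<union> fv \<psi>"
| "fv (Ex x \<phi>) = fv \<phi> - {x}"
| "fv (Q k Xs \<psi>s) = (\<Union>\<psi> \<in> set \<psi>s. fv \<psi>)"

fun frv :: "'a form \<Rightarrow> nat set" where
  "frv (Rel r ts) = {r}"
| "frv (Neg \<phi>) = frv \<phi>"
| "frv (Conj \<phi> \<psi>) = frv \<phi> \<union> frv \<psi>"
| "frv (Ex x \<phi>) = frv \<phi>"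
| "frv (Q k Xs \<psi>s) = (\<Union>\<psi> \<in> set \<psi>s. frv \<psi>) - set Xs"
| "frv _ = {}"

fun pureFO :: "'a set \<Rightarrow> nat \<Rightarrow> 'a form \<Rightarrow> bool" where
  "pureFO Sig k (Eq s t) = True"
| "pureFO Sig k (Less s t) = True"
| "pureFO Sig k (Plus a b c) = False"
| "pureFO Sig k (Times a b c) = False"
| "pureFO Sig k (Letter a t) = (a \<in> Sig)"
| "pureFO Sig k (Rel r ts) = (length ts = k)"
| "pureFO Sig k (Neg \<phi>) = pureFO Sig k \<phi>"
| "pureFO Sig k (Conj \<phi> \<psi>) = (pureFO Sig k \<phi> \<and> pureFO Sig k \<psi>)"
| "pureFO Sig k (Ex x \<phi>) = pureFO Sig k \<phi>"
| "pureFO Sig k (Q m Xs \<psi>s) = False"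

fun wf_FOQ :: "'a set \<Rightarrow> nat \<Rightarrow> 'a form \<Rightarrow> bool" where
  "wf_FOQ Sig s (Letter a t) = (a \<in> Sig)"
| "wf_FOQ Sig s (Rel r ts) = (length ts = 1)"
| "wf_FOQ Sig s (Neg \<phi>) = wf_FOQ Sig s \<phi>"
| "wf_FOQ Sig s (Conj \<phi> \<psi>) = (wf_FOQ Sig s \<phi> \<and> wf_FOQ Sig s \<psi>)"
| "wf_FOQ Sig s (Ex x \<phi>) = wf_FOQ Sig s \<phi>"
| "wf_FOQ Sig s (Q m Xs \<psi>s) =
     (m = 1 \<and> Xs \<noteq> [] \<and> distinct Xs \<and> length \<psi>s = s - 1 \<and> (\<forall>\<psi> \<in> set \<psi>s. wf_FOQ Sig s \<psi>))"
| "wf_FOQ Sig s _ = True"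

definition FOQ_sentence :: "'a set \<Rightarrow> nat \<Rightarrow> 'a form \<Rightarrow> bool" where
  "FOQ_sentence Sig s \<phi> \<longleftrightarrow> wf_FOQ Sig s \<phi> \<and> fv \<phi> = {} \<and> frv \<phi> = {}"

definition QLFO_sentence :: "'a set \<Rightarrow> nat \<Rightarrow> nat \<Rightarrow> 'a form \<Rightarrow> bool" where
  "QLFO_sentence Sig s k \<phi> \<longleftrightarrow>
     (\<exists>Xs \<psi>s. \<phi> = Q k Xs \<psi>s \<and> Xs \<noteq> [] \<and> distinct Xs \<and> length \<psi>s = s - 1 \<and>
        (\<forall>\<psi> \<in> set \<psi>s. pureFO Sig k \<psi> \<and> fv \<psi> = {} \<and> frv \<psi> \<subseteq> set Xs))"

definition defines_lang :: "'b list \<Rightarrow> 'b list set \<Rightarrow> 'a set \<Rightarrow> 'a form \<Rightarrow> 'a list set \<Rightarrow> bool" where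
  "defines_lang bs L Sig \<phi> A \<longleftrightarrow>
     A = {w. w \<noteq> [] \<and> set w \<subseteq> Sig \<and> sat bs L w (\<lambda>_. 0) (\<lambda>_. {}) \<phi>}"

end

theory Submission
  imports Defs
begin

text \<open>Let w have length n, so that w' = w \<sharp>^(n^k - n) has length n^k. Reading a position of w'
  in base n identifies it with a k-tuple over the positions of w, and since the lexicographic order
  of k-tuples is the numerical order of their base-n values, the assignments of k-ary relations
  over w and of unary relations over w' are enumerated by the same bit strings in the same order.
  Hence Q*_L sees the same word on both sides once every atom R(x_1,...,x_k) is replaced by the
  unary atom R(x_1 n^(k-1) + ... + x_k) and the first-order quantifiers are relativised to w.
  The translated sentence guesses the last position n - 1 of w, checks with + and \<times> that the
  input has the shape w \<sharp>^(n^k - n), and evaluates the base-n values by Horner's rule.\<close>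

section \<open>Base-n digits\<close>

fun digits :: "nat \<Rightarrow> nat \<Rightarrow> nat \<Rightarrow> nat list" where
  "digits n 0 j = []"
| "digits n (Suc k) j = j div n ^ k # digits n k (j mod n ^ k)"

fun horner :: "nat \<Rightarrow> nat \<Rightarrow> nat list \<Rightarrow> nat" where
  "horner n a [] = a"
| "horner n a (x # xs) = horner n (a * n + x) xs"

lemma length_digits [simp]: "length (digits n k j) = k"
  by (induction k arbitrary: j) auto

lemma horner_digits: "0 < n \<Longrightarrow> j < n ^ k \<Longrightarrow> horner n a (digits n k j) = a * n ^ k + j"
proof (induction k arbitrary: a j)
  case (Suc k)
  then have "horner n a (digits n (Suc k) j) = (a * n + j div n ^ k) * n ^ k + j mod n ^ k"
    by simp
  also have "\<dots> = a * n ^ Suc k + j"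
    by (simp add: algebra_simps)
  finally show ?case .
qed simp

lemma set_digits_subset: "0 < n \<Longrightarrow> j < n ^ k \<Longrightarrow> set (digits n k j) \<subseteq> {..<n}"
proof (induction k arbitrary: j)
  case (Suc k)
  then have "j div n ^ k < n"
    by (simp add: less_mult_imp_div_less mult.commute)
  with Suc show ?case by simp
qed simp

lemma digits_strict_mono: "0 < n \<Longrightarrow> i < j \<Longrightarrow> j < n ^ k \<Longrightarrow> digits n k i < digits n k j"
proof (induction k arbitrary: i j)
  case (Suc k)
  have le: "i div n ^ k \<le> j div n ^ k"
    using Suc.prems by (simp add: div_le_mono)
  show ?case
  proof (cases "i div n ^ k = j div n ^ k")
    case True
    then have "i mod n ^ k < j mod n ^ k"
      using Suc.prems by (metis div_mult_mod_eq nat_add_left_cancel_less)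
    with Suc True show ?thesis by simp
  next
    case False
    with le show ?thesis by simp
  qed
qed simp

lemma card_tuples_set: "card {xs. length xs = k \<and> set xs \<subseteq> {..<n::nat}} = n ^ k"
  using card_lists_length_eq[of "{..<n}" k] by (simp add: conj_commute)

lemma finite_tuples_set: "finite {xs. length xs = k \<and> set xs \<subseteq> {..<n::nat}}"
  using finite_lists_length_eq[OF finite_lessThan, of n k] by (simp add: conj_commute)

lemma digits_image:
  assumes "0 < n"
  shows "digits n k ` {..<n ^ k} = {xs. length xs = k \<and> set xs \<subseteq> {..<n}}"
proof (rule card_subset_eq[OF finite_tuples_set])
  show "digits n k ` {..<n ^ k} \<subseteq> {xs. length xs = k \<and> set xs \<subseteq> {..<n}}"
    using set_digits_subset assms by auto
  have "inj_on (digits n k) {..<n ^ k}"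
    by (metis assms horner_digits inj_onI lessThan_iff mult_0 add_0)
  then show "card (digits n k ` {..<n ^ k}) = card {xs. length xs = k \<and> set xs \<subseteq> {..<n}}"
    by (simp add: card_image card_tuples_set)
qed

lemma tuples_eq_map_digits:
  assumes "0 < n"
  shows "tuples n k = map (digits n k) [0..<n ^ k]"
proof -
  have "sorted_wrt (<) (map (digits n k) [0..<n ^ k])"
    by (auto simp: sorted_wrt_map sorted_wrt_iff_nth_less intro: digits_strict_mono[OF assms])
  moreover have "set (map (digits n k) [0..<n ^ k]) = {xs. length xs = k \<and> set xs \<subseteq> {..<n}}"
    using digits_image[OF assms] by (simp add: atLeast0LessThan)
  ultimately show ?thesis
    unfolding tuples_def
    using sorted_list_of_set_unique[OF finite_tuples_set[of k n], of "map (digits n k) [0..<n ^ k]"]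
    by (simp add: card_tuples_set)
qed

lemma nth_tuples: "0 < n \<Longrightarrow> j < n ^ k \<Longrightarrow> tuples n k ! j = digits n k j"
  by (simp add: tuples_eq_map_digits)

lemma horner_less_and_digits_horner:
  assumes "0 < n" "length v = k" "set v \<subseteq> {..<n}"
  shows "horner n 0 v < n ^ k \<and> digits n k (horner n 0 v) = v"
proof -
  have "v \<in> digits n k ` {..<n ^ k}"
    using digits_image[OF assms(1)] assms by blast
  then obtain j where "j < n ^ k" "v = digits n k j"
    by blast
  then show ?thesis
    using horner_digits[OF assms(1)] by simp
qed

lemma horner_ge_acc: "0 < n \<Longrightarrow> a \<le> horner n a xs"
proof (induction xs arbitrary: a)
  case (Cons x xs)
  then have "a * 1 \<le> a * n"
    by (intro mult_le_mono2) simp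
  then have "a \<le> a * n + x"
    by linarith
  with Cons.IH[of "a * n + x"] Cons.prems show ?case by simp
qed simp

lemma horner_replicate_max: "0 < n \<Longrightarrow> horner n a (replicate k (n - 1)) = (a + 1) * n ^ k - 1"
proof (induction k arbitrary: a)
  case (Suc k)
  have "a * n + (n - 1) = (a + 1) * n - 1"
    using Suc.prems by (simp add: algebra_simps)
  then have "horner n a (replicate (Suc k) (n - 1)) = horner n ((a + 1) * n - 1) (replicate k (n - 1))"
    by simp
  also have "\<dots> = ((a + 1) * n - 1 + 1) * n ^ k - 1"
    using Suc by blast
  also have "\<dots> = (a + 1) * n ^ Suc k - 1"
    using Suc.prems by (simp add: algebra_simps)
  finally show ?case .
qed simp

section \<open>Horner evaluation inside a formula\<close>

text \<open>Variable 0 holds the base minus one, so that the base itself need not be a position.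
  horner_form d acc ts cont uses the variables d, ..., d + 3 * length ts - 1 as accumulators
  and scratch space.\<close>

definition horner_step_form :: "nat \<Rightarrow> trm \<Rightarrow> trm \<Rightarrow> trm \<Rightarrow> 'a form" where
  "horner_step_form d a b z = Ex (d + 1) (Ex (d + 2) (Conj (Times a (V 0) (V (d + 1)))
      (Conj (Plus (V (d + 1)) a (V (d + 2))) (Plus (V (d + 2)) b z))))"

fun horner_form :: "nat \<Rightarrow> trm \<Rightarrow> trm list \<Rightarrow> (trm \<Rightarrow> 'a form) \<Rightarrow> 'a form" where
  "horner_form d acc [] cont = cont acc"
| "horner_form d acc (t # ts) cont =
     Ex d (Conj (horner_step_form d acc t (V d)) (horner_form (d + 3) (V d) ts cont))"

lemma teval_cong: "(\<And>x. x \<in> tvars t \<Longrightarrow> \<nu> x = \<nu>' x) \<Longrightarrow> teval n \<nu> t = teval n \<nu>' t"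
  by (cases t) auto

lemma sat_horner_step_form:
  assumes "\<forall>t \<in> {a, b, z}. d + 1 \<notin> tvars t \<and> d + 2 \<notin> tvars t" "0 < d"
    and "teval (length w) \<nu> z < length w"
  shows "sat bs L w \<nu> \<rho> (horner_step_form d a b z) \<longleftrightarrow>
     teval (length w) \<nu> z = teval (length w) \<nu> a * (\<nu> 0 + 1) + teval (length w) \<nu> b"
proof -
  let ?N = "length w"
  let ?a = "teval ?N \<nu> a" and ?b = "teval ?N \<nu> b" and ?z = "teval ?N \<nu> z"
  have "teval ?N (\<nu>(d + 1 := q, d + 2 := r)) t = teval ?N \<nu> t" if "t \<in> {a, b, z}" for t q r
    using assms(1) that by (intro teval_cong) auto
  then have "sat bs L w \<nu> \<rho> (horner_step_form d a b z) \<longleftrightarrow>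
     (\<exists>q < ?N. \<exists>r < ?N. ?a * \<nu> 0 = q \<and> q + ?a = r \<and> r + ?b = ?z)"
    using assms(2) by (simp add: horner_step_form_def)
  also have "\<dots> \<longleftrightarrow> ?z = ?a * (\<nu> 0 + 1) + ?b"
    using assms(3) by (auto simp: algebra_simps)
  finally show ?thesis .
qed

lemma sat_horner_form:
  assumes "\<forall>t \<in> insert acc (set ts). \<forall>x \<in> tvars t. x < d \<or> d + 3 * length ts \<le> x"
    and "0 < d"
    and "\<And>t \<nu>'. sat bs L w \<nu>' \<rho> (cont t) = P (teval (length w) \<nu>' t)"
    and "P (horner (\<nu> 0 + 1) (teval (length w) \<nu> acc) (map (teval (length w) \<nu>) ts))
      \<Longrightarrow> horner (\<nu> 0 + 1) (teval (length w) \<nu> acc) (map (teval (length w) \<nu>) ts) < length w"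
  shows "sat bs L w \<nu> \<rho> (horner_form d acc ts cont) \<longleftrightarrow>
     P (horner (\<nu> 0 + 1) (teval (length w) \<nu> acc) (map (teval (length w) \<nu>) ts))"
  using assms
proof (induction ts arbitrary: d acc \<nu>)
  case (Cons t ts)
  let ?N = "length w"
  let ?a = "teval ?N \<nu> acc" and ?b = "teval ?N \<nu> t"
  let ?rest = "map (teval ?N \<nu>) ts"
  have acc: "teval ?N (\<nu>(d := i)) acc = ?a" and t: "teval ?N (\<nu>(d := i)) t = ?b" for i
    using Cons.prems(1) by (intro teval_cong; auto)+
  have rest: "map (teval ?N (\<nu>(d := i))) ts = ?rest" for i
    using Cons.prems(1) by (fastforce intro: list.map_cong0 teval_cong)
  have base: "(\<nu>(d := i)) 0 = \<nu> 0" for i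
    using Cons.prems(2) by simp
  have step: "sat bs L w (\<nu>(d := i)) \<rho> (horner_step_form d acc t (V d)) \<longleftrightarrow>
      i = ?a * (\<nu> 0 + 1) + ?b" if "i < ?N" for i
  proof -
    have "\<forall>t' \<in> {acc, t, V d}. d + 1 \<notin> tvars t' \<and> d + 2 \<notin> tvars t'"
      using Cons.prems(1) by fastforce
    from sat_horner_step_form[OF this Cons.prems(2), of w "\<nu>(d := i)"] that
    show ?thesis using Cons.prems(2) by (simp add: acc t)
  qed
  have IH: "sat bs L w (\<nu>(d := i)) \<rho> (horner_form (d + 3) (V d) ts cont) \<longleftrightarrow>
      P (horner (\<nu> 0 + 1) i ?rest)" if "i = ?a * (\<nu> 0 + 1) + ?b" for i
    using Cons.IH[where d = "d + 3" and acc = "V d" and \<nu> = "\<nu>(d := i)"] Cons.prems that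
    by (fastforce simp: base rest)
  show ?case
  proof
    assume "sat bs L w \<nu> \<rho> (horner_form d acc (t # ts) cont)"
    then obtain i where "i < ?N" "sat bs L w (\<nu>(d := i)) \<rho> (horner_step_form d acc t (V d))"
      "sat bs L w (\<nu>(d := i)) \<rho> (horner_form (d + 3) (V d) ts cont)"
      by auto
    then show "P (horner (\<nu> 0 + 1) ?a (map (teval ?N \<nu>) (t # ts)))"
      using step IH by simp
  next
    assume P: "P (horner (\<nu> 0 + 1) ?a (map (teval ?N \<nu>) (t # ts)))"
    let ?i = "?a * (\<nu> 0 + 1) + ?b"
    have "?i \<le> horner (\<nu> 0 + 1) ?a (map (teval ?N \<nu>) (t # ts))"
      using horner_ge_acc[of "\<nu> 0 + 1"] by simp
    then have "?i < ?N"
      using Cons.prems(4) P by simp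
    then show "sat bs L w \<nu> \<rho> (horner_form d acc (t # ts) cont)"
      using step[of ?i] IH[of ?i] P by auto
  qed
qed simp

lemma fv_horner_form:
  "(\<And>t. fv (cont t) \<subseteq> tvars t) \<Longrightarrow>
    fv (horner_form d acc ts cont) \<subseteq> insert 0 (tvars acc \<union> (\<Union>t \<in> set ts. tvars t))"
proof (induction ts arbitrary: d acc)
  case (Cons t ts)
  then have "fv (horner_form (d + 3) (V d) ts cont) \<subseteq> insert 0 (insert d (\<Union>t \<in> set ts. tvars t))"
    by fastforce
  then show ?case
    by (auto simp: horner_step_form_def)
qed fastforce

lemma frv_horner_form: "(\<And>t. frv (cont t) \<subseteq> R) \<Longrightarrow> frv (horner_form d acc ts cont) \<subseteq> R"
  by (induction ts arbitrary: d acc) (auto simp: horner_step_form_def)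

lemma wf_FOQ_horner_form: "(\<And>t. wf_FOQ S s (cont t)) \<Longrightarrow> wf_FOQ S s (horner_form d acc ts cont)"
  by (induction ts arbitrary: d acc) (auto simp: horner_step_form_def)

section \<open>From k-ary relations over w to unary relations over a padding of w\<close>

text \<open>Over the padded word, variable 0 holds the last position of w (the value of max there),
  variable x of the original formula becomes x + c, and variables 1, ..., c - 1 are left
  free as scratch space for the Horner evaluations of atoms.\<close>

fun shift_trm :: "nat \<Rightarrow> trm \<Rightarrow> trm" where
  "shift_trm c (V x) = V (x + c)"
| "shift_trm c Mn = Mn"
| "shift_trm c Mx = V 0"

fun unary_form :: "nat \<Rightarrow> 'a form \<Rightarrow> 'a form" where
  "unary_form c (Eq s t) = Eq (shift_trm c s) (shift_trm c t)"
| "unary_form c (Less s t) = Less (shift_trm c s) (shift_trm c t)"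
| "unary_form c (Letter a t) = Letter a (shift_trm c t)"
| "unary_form c (Rel r ts) = horner_form 1 Mn (map (shift_trm c) ts) (\<lambda>z. Rel r [z])"
| "unary_form c (Neg \<phi>) = Neg (unary_form c \<phi>)"
| "unary_form c (Conj \<phi> \<psi>) = Conj (unary_form c \<phi>) (unary_form c \<psi>)"
| "unary_form c (Ex x \<phi>) = Ex (x + c) (Conj (Neg (Less (V 0) (V (x + c)))) (unary_form c \<phi>))"
| "unary_form c _ = Eq Mn Mn" \<comment> \<open>Plus, Times and Q do not occur in pure first-order formulas\<close>

definition unary_code :: "nat \<Rightarrow> nat \<Rightarrow> nat list set \<Rightarrow> nat list set \<Rightarrow> bool" where
  "unary_code n k A A' \<longleftrightarrow>
     (\<forall>v. length v = k \<and> set v \<subseteq> {..<n} \<longrightarrow> (v \<in> A \<longleftrightarrow> [horner n 0 v] \<in> A'))"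

lemma teval_shift_trm:
  assumes "\<forall>x. \<nu>' (x + c) = \<nu> x" "\<nu>' 0 = n - 1"
  shows "teval N \<nu>' (shift_trm c t) = teval n \<nu> t"
  using assms by (cases t) auto

lemma teval_less: "0 < n \<Longrightarrow> \<forall>x \<in> tvars t. \<nu> x < n \<Longrightarrow> teval n \<nu> t < n"
  by (cases t) auto

lemma tvars_shift_trm: "tvars (shift_trm c t) \<subseteq> insert 0 ((\<lambda>x. x + c) ` tvars t)"
  by (cases t) auto

lemma sat_unary_form_Rel:
  assumes "length ts = k" "0 < length w" "length w ^ k \<le> length w'" "3 * k < c"
    and "\<forall>x. \<nu>' (x + c) = \<nu> x" "\<nu>' 0 = length w - 1" "\<forall>t \<in> set ts. \<forall>x \<in> tvars t. \<nu> x < length w"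
    and "unary_code (length w) k (\<rho> r) (\<rho>' r)"
  shows "sat bs L w' \<nu>' \<rho>' (unary_form c (Rel r ts)) \<longleftrightarrow> sat bs L w \<nu> \<rho> (Rel r ts)"
proof -
  let ?n = "length w" and ?N = "length w'"
  let ?v = "map (teval ?n \<nu>) ts"
  have v: "set ?v \<subseteq> {..<?n}"
    using assms(2,7) teval_less[of ?n] by auto
  have vals: "map (teval ?N \<nu>') (map (shift_trm c) ts) = ?v"
    using assms(5,6) by (simp add: teval_shift_trm)
  have base: "\<nu>' 0 + 1 = ?n"
    using assms(2,6) by simp
  have less: "horner ?n 0 ?v < ?n ^ k"
    using horner_less_and_digits_horner[of ?n ?v k] v assms(1,2) by simp
  have hval: "horner (\<nu>' 0 + 1) (teval ?N \<nu>' Mn) (map (teval ?N \<nu>') (map (shift_trm c) ts)) =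
      horner ?n 0 ?v"
    by (simp only: base vals teval.simps)
  have "sat bs L w' \<nu>' \<rho>' (unary_form c (Rel r ts)) \<longleftrightarrow>
      [horner (\<nu>' 0 + 1) (teval ?N \<nu>' Mn) (map (teval ?N \<nu>') (map (shift_trm c) ts))] \<in> \<rho>' r"
    unfolding unary_form.simps
  proof (rule sat_horner_form)
    show "\<forall>t \<in> insert Mn (set (map (shift_trm c) ts)).
        \<forall>x \<in> tvars t. x < 1 \<or> 1 + 3 * length (map (shift_trm c) ts) \<le> x"
      using assms(1,4) tvars_shift_trm[of c] by fastforce
    show "horner (\<nu>' 0 + 1) (teval ?N \<nu>' Mn) (map (teval ?N \<nu>') (map (shift_trm c) ts)) < ?N"
      unfolding hval using less assms(3) by linarith
  qed simp_all
  also have "\<dots> \<longleftrightarrow> ?v \<in> \<rho> r"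
    using assms(1,8) v unfolding hval unary_code_def by simp
  finally show ?thesis by simp
qed

lemma sat_unary_form:
  assumes "pureFO Sig k \<psi>" "w' = w @ ys" "0 < length w" "length w ^ k \<le> length w'" "3 * k < c"
    and "\<forall>x. \<nu>' (x + c) = \<nu> x" "\<nu>' 0 = length w - 1" "\<forall>x \<in> fv \<psi>. \<nu> x < length w"
    and "\<forall>r. unary_code (length w) k (\<rho> r) (\<rho>' r)"
  shows "sat bs L w' \<nu>' \<rho>' (unary_form c \<psi>) = sat bs L w \<nu> \<rho> \<psi>"
  using assms
proof (induction \<psi> arbitrary: \<nu> \<nu>')
  case (Eq s t)
  then show ?case using teval_shift_trm[of \<nu>' c \<nu> "length w"] by simp
next
  case (Less s t)
  then show ?case using teval_shift_trm[of \<nu>' c \<nu> "length w"] by simp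
next
  case (Letter a t)
  then have "teval (length w) \<nu> t < length w"
    by (intro teval_less) auto
  then have "w' ! teval (length w) \<nu> t = w ! teval (length w) \<nu> t"
    using Letter.prems(2) nth_append_left by blast
  moreover have "teval (length w') \<nu>' (shift_trm c t) = teval (length w) \<nu> t"
    using Letter.prems(6,7) by (rule teval_shift_trm)
  ultimately show ?case
    by simp
next
  case (Rel r ts)
  then show ?case
    by (intro sat_unary_form_Rel) auto
next
  case (Conj \<phi> \<chi>)
  have "sat bs L w' \<nu>' \<rho>' (unary_form c \<phi>) = sat bs L w \<nu> \<rho> \<phi>"
    using Conj.prems by (intro Conj.IH(1)) auto
  moreover have "sat bs L w' \<nu>' \<rho>' (unary_form c \<chi>) = sat bs L w \<nu> \<rho> \<chi>"
    using Conj.prems by (intro Conj.IH(2)) auto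
  ultimately show ?case
    by simp
next
  case (Ex x \<phi>)
  let ?n = "length w" and ?N = "length w'"
  have IH: "sat bs L w' (\<nu>'(x + c := i)) \<rho>' (unary_form c \<phi>) = sat bs L w (\<nu>(x := i)) \<rho> \<phi>"
    if "i < ?n" for i
    using Ex.prems that by (intro Ex.IH) auto
  have "sat bs L w' \<nu>' \<rho>' (unary_form c (Ex x \<phi>)) \<longleftrightarrow>
     (\<exists>i < ?N. i < ?n \<and> sat bs L w' (\<nu>'(x + c := i)) \<rho>' (unary_form c \<phi>))"
  proof -
    have "\<not> ?n - 1 < i \<longleftrightarrow> i < ?n" for i
      using Ex.prems(3) by linarith
    then show ?thesis
      using Ex.prems(5,7) by simp
  qed
  also have "\<dots> \<longleftrightarrow> (\<exists>i < ?n. sat bs L w (\<nu>(x := i)) \<rho> \<phi>)"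
    using IH Ex.prems(2) by (metis length_append trans_less_add1)
  finally show ?case by simp
qed auto

lemma fv_unary_form: "fv (unary_form c \<psi>) \<subseteq> insert 0 ((\<lambda>x. x + c) ` fv \<psi>)"
proof (induction \<psi>)
  case (Rel r ts)
  have "fv (unary_form c (Rel r ts)) \<subseteq> insert 0 (\<Union>t \<in> set (map (shift_trm c) ts). tvars t)"
    unfolding unary_form.simps using fv_horner_form[of "\<lambda>z. Rel r [z]"] by fastforce
  then show ?case
    using tvars_shift_trm[of c] by fastforce
qed (use tvars_shift_trm[of c] in auto)

lemma frv_unary_form: "frv (unary_form c \<psi>) \<subseteq> frv \<psi>"
proof (induction \<psi>)
  case (Rel r ts)
  show ?case
    unfolding unary_form.simps by (rule frv_horner_form) simp
qed auto

lemma wf_FOQ_unary_form: "pureFO Sig k \<psi> \<Longrightarrow> Sig \<subseteq> S \<Longrightarrow> wf_FOQ S s (unary_form c \<psi>)"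
  by (induction \<psi>) (auto intro: wf_FOQ_horner_form)

lemma unary_code_upd:
  assumes "\<forall>r. unary_code n k (\<rho> r) (\<rho>' r)" "list_all2 (unary_code n k) As As'"
  shows "\<forall>r. unary_code n k (upd \<rho> Xs As r) (upd \<rho>' Xs As' r)"
  using assms(2)
proof (induction Xs arbitrary: As As')
  case (Cons x Xs)
  show ?case
  proof (cases As)
    case Nil
    with Cons.prems assms(1) show ?thesis by simp
  next
    case (Cons A As1)
    with Cons.prems obtain A' As1' where
      "As' = A' # As1'" "unary_code n k A A'" "list_all2 (unary_code n k) As1 As1'"
      by (auto simp: list_all2_Cons1)
    with Cons.IH[of As1 As1'] Cons show ?thesis by simp
  qed
qed (use assms(1) in simp)

lemma tuples_comprehension:
  assumes "0 < n"
  shows "{tuples n k ! j |j. j < n ^ k \<and> P j} = digits n k ` {j. j < n ^ k \<and> P j}"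
proof -
  have "{tuples n k ! j |j. j < n ^ k \<and> P j} = (!) (tuples n k) ` {j. j < n ^ k \<and> P j}"
    by blast
  also have "\<dots> = digits n k ` {j. j < n ^ k \<and> P j}"
    using nth_tuples[OF assms] by (intro image_cong) auto
  finally show ?thesis .
qed

lemma mem_digits_image_iff:
  assumes "0 < n" "S \<subseteq> {..<n ^ k}" "length v = k" "set v \<subseteq> {..<n}"
  shows "v \<in> digits n k ` S \<longleftrightarrow> horner n 0 v \<in> S"
proof
  assume "v \<in> digits n k ` S"
  then obtain j where "j \<in> S" "v = digits n k j"
    by blast
  moreover have "j < n ^ k"
    using \<open>j \<in> S\<close> assms(2) by blast
  ultimately show "horner n 0 v \<in> S"
    using horner_digits[OF assms(1)] by simp
next
  assume "horner n 0 v \<in> S"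
  then show "v \<in> digits n k ` S"
    using horner_less_and_digits_horner[OF assms(1,3,4)] by (metis image_eqI)
qed

lemma unary_code_decode:
  assumes "0 < n" "N = n ^ k"
  shows "list_all2 (unary_code n k) (decode n k t cd) (decode N 1 t cd)"
proof -
  have "unary_code n k (digits n k ` {j. j < n ^ k \<and> cd ! (i * n ^ k + j)})
                       (digits N 1 ` {j. j < N \<and> cd ! (i * N + j)})" for i
    unfolding unary_code_def
  proof (intro allI impI)
    fix v :: "nat list"
    assume v: "length v = k \<and> set v \<subseteq> {..<n}"
    have "v \<in> digits n k ` {j. j < n ^ k \<and> cd ! (i * n ^ k + j)} \<longleftrightarrow>
        horner n 0 v \<in> {j. j < n ^ k \<and> cd ! (i * n ^ k + j)}"
      using v by (intro mem_digits_image_iff[OF assms(1)]) auto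
    then show "v \<in> digits n k ` {j. j < n ^ k \<and> cd ! (i * n ^ k + j)} \<longleftrightarrow>
        [horner n 0 v] \<in> digits N 1 ` {j. j < N \<and> cd ! (i * N + j)}"
      using assms(2) by auto
  qed
  moreover have "0 < N"
    using assms by simp
  ultimately show ?thesis
    unfolding decode_def tuples_comprehension[OF assms(1)] tuples_comprehension[OF \<open>0 < N\<close>]
    by (auto simp: list_all2_conv_all_nth)
qed

lemma sat_Q_unary_form:
  assumes "\<forall>\<psi> \<in> set \<psi>s. pureFO Sig k \<psi>" "w' = w @ ys" "w \<noteq> []" "length w' = length w ^ k"
    and "3 * k < c" "\<forall>x. \<nu>' (x + c) = \<nu> x" "\<nu>' 0 = length w - 1"
    and "\<forall>\<psi> \<in> set \<psi>s. \<forall>x \<in> fv \<psi>. \<nu> x < length w"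
    and "\<forall>r. unary_code (length w) k (\<rho> r) (\<rho>' r)"
  shows "sat bs L w' \<nu>' \<rho>' (Q 1 Xs (map (unary_form c) \<psi>s)) \<longleftrightarrow> sat bs L w \<nu> \<rho> (Q k Xs \<psi>s)"
proof -
  let ?n = "length w"
  have "map (\<lambda>\<psi>. sat bs L w' \<nu>' (upd \<rho>' Xs (decode (length w') 1 (length Xs) cd)) \<psi>)
          (map (unary_form c) \<psi>s) =
        map (\<lambda>\<psi>. sat bs L w \<nu> (upd \<rho> Xs (decode ?n k (length Xs) cd)) \<psi>) \<psi>s" for cd
  proof -
    have "\<forall>r. unary_code ?n k (upd \<rho> Xs (decode ?n k (length Xs) cd) r)
                 (upd \<rho>' Xs (decode (length w') 1 (length Xs) cd) r)"
      using assms(3,4,9) by (intro unary_code_upd unary_code_decode) auto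
    then show ?thesis
      unfolding map_map o_def
      using assms by (intro list.map_cong0 sat_unary_form) auto
  qed
  then show ?thesis
    using assms(4) by (simp del: map_map)
qed

section \<open>Recognising the padding\<close>

lemma length_padding:
  assumes "1 \<le> k"
  shows "length (w @ replicate (length w ^ k - length w) x) = length w ^ k"
proof (cases "w = []")
  case False
  then have "length w \<le> length w ^ k"
    using assms by (intro self_le_power) (auto simp: Suc_le_eq)
  then show ?thesis by simp
qed (use assms in simp)

lemma padded_word_iff:
  assumes "1 \<le> k" "y < length u"
  shows "(\<forall>i < length u. i \<le> y \<longrightarrow> u ! i \<noteq> x) \<and> (\<forall>i < length u. y < i \<longrightarrow> u ! i = x) \<and>
      (y + 1) ^ k - 1 = length u - 1 \<longleftrightarrow>
    (\<exists>w. length w = y + 1 \<and> x \<notin> set w \<and> u = w @ replicate (length w ^ k - length w) x)"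
    (is "?shape \<longleftrightarrow> ?padded")
proof
  assume shape: ?shape
  define w where "w = take (y + 1) u"
  have w: "length w = y + 1"
    using assms(2) by (simp add: w_def)
  have "x \<notin> set w"
    using shape assms(2) by (auto simp: w_def in_set_conv_nth)
  moreover have "u = w @ replicate (length w ^ k - length w) x"
  proof -
    have "0 < (y + 1) ^ k"
      by simp
    then have "length u = (y + 1) ^ k"
      using shape assms(2) by linarith
    moreover have "drop (y + 1) u = replicate (length u - (y + 1)) x"
      using shape by (intro nth_equalityI) auto
    ultimately show ?thesis
      using w unfolding w_def by (metis append_take_drop_id)
  qed
  ultimately show ?padded
    using w by blast
next
  assume ?padded
  then obtain w where w: "length w = y + 1" "x \<notin> set w"
    and u: "u = w @ replicate (length w ^ k - length w) x"
    by blast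
  have "length u = (y + 1) ^ k"
    using length_padding[OF assms(1), of w x] u w(1) by simp
  moreover have "u ! i \<noteq> x" if "i \<le> y" for i
    using that w u by (metis le_imp_less_Suc Suc_eq_plus1 nth_append_left nth_mem)
  moreover have "u ! i = x" if "y < i" "i < length u" for i
    using that w u by (simp add: nth_append)
  ultimately show ?shape
    by auto
qed

text \<open>The last conjunct says max = (x_0 + 1)^k - 1, evaluating the k digits x_0 ... x_0
  in base x_0 + 1.\<close>

definition padding_shape :: "nat \<Rightarrow> 'a \<Rightarrow> 'a form" where
  "padding_shape k x =
     Conj (Neg (Ex 1 (Conj (Neg (Less (V 0) (V 1))) (Letter x (V 1)))))
       (Conj (Neg (Ex 1 (Conj (Less (V 0) (V 1)) (Neg (Letter x (V 1))))))
         (horner_form 1 Mn (replicate k (V 0)) (\<lambda>z. Eq z Mx)))"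

lemma sat_padding_shape:
  assumes "1 \<le> k" "\<nu> 0 < length u"
  shows "sat bs L u \<nu> \<rho> (padding_shape k x) \<longleftrightarrow>
    (\<exists>w. length w = \<nu> 0 + 1 \<and> x \<notin> set w \<and> u = w @ replicate (length w ^ k - length w) x)"
proof -
  have "sat bs L u \<nu> \<rho> (horner_form 1 Mn (replicate k (V 0)) (\<lambda>z. Eq z Mx)) \<longleftrightarrow>
     horner (\<nu> 0 + 1) (teval (length u) \<nu> Mn) (map (teval (length u) \<nu>) (replicate k (V 0)))
       = length u - 1"
    by (rule sat_horner_form[where P = "\<lambda>v. v = length u - 1"]) (use assms(2) in auto)
  also have "horner (\<nu> 0 + 1) (teval (length u) \<nu> Mn) (map (teval (length u) \<nu>) (replicate k (V 0)))
     = (\<nu> 0 + 1) ^ k - 1"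
    using horner_replicate_max[of "\<nu> 0 + 1" 0 k] by simp
  finally have "sat bs L u \<nu> \<rho> (padding_shape k x) \<longleftrightarrow>
    (\<forall>i < length u. i \<le> \<nu> 0 \<longrightarrow> u ! i \<noteq> x) \<and> (\<forall>i < length u. \<nu> 0 < i \<longrightarrow> u ! i = x) \<and>
    (\<nu> 0 + 1) ^ k - 1 = length u - 1"
    unfolding padding_shape_def by (auto simp: not_less; meson not_le)
  also have "\<dots> \<longleftrightarrow> (\<exists>w. length w = \<nu> 0 + 1 \<and> x \<notin> set w \<and> u = w @ replicate (length w ^ k - length w) x)"
    by (rule padded_word_iff[OF assms])
  finally show ?thesis .
qed

definition padded_sentence :: "nat \<Rightarrow> 'a \<Rightarrow> nat list \<Rightarrow> 'a form list \<Rightarrow> 'a form" where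
  "padded_sentence k x Xs \<psi>s =
     Ex 0 (Conj (padding_shape k x) (Q 1 Xs (map (unary_form (3 * k + 1)) \<psi>s)))"

lemma FOQ_sentence_padded_sentence:
  assumes "Xs \<noteq> []" "distinct Xs" "length \<psi>s = s - 1"
    and "\<forall>\<psi> \<in> set \<psi>s. pureFO Sig k \<psi> \<and> fv \<psi> = {} \<and> frv \<psi> \<subseteq> set Xs"
  shows "FOQ_sentence (Sig \<union> {x}) s (padded_sentence k x Xs \<psi>s)"
proof -
  have "fv (horner_form 1 Mn (replicate k (V 0)) (\<lambda>z. Eq z Mx)) \<subseteq>
      insert 0 (tvars Mn \<union> (\<Union>t \<in> set (replicate k (V 0)). tvars t))"
    by (rule fv_horner_form) simp
  also have "\<dots> \<subseteq> {0}"
    by auto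
  finally have "fv (padding_shape k x) \<subseteq> {0}"
    by (auto simp: padding_shape_def)
  moreover have "\<forall>\<psi> \<in> set \<psi>s. fv (unary_form (3 * k + 1) \<psi>) \<subseteq> {0}"
    using assms(4) fv_unary_form[of "3 * k + 1"] by fastforce
  moreover have "frv (padding_shape k x) = {}"
    using frv_horner_form[of "\<lambda>z. Eq z Mx" "{}" 1 Mn "replicate k (V 0)"]
    by (auto simp: padding_shape_def)
  moreover have "\<forall>\<psi> \<in> set \<psi>s. frv (unary_form (3 * k + 1) \<psi>) \<subseteq> set Xs"
    using assms(4) frv_unary_form by blast
  moreover have "wf_FOQ (Sig \<union> {x}) s (padding_shape k x)"
    by (auto simp: padding_shape_def intro!: wf_FOQ_horner_form)
  moreover have "\<forall>\<psi> \<in> set \<psi>s. wf_FOQ (Sig \<union> {x}) s (unary_form (3 * k + 1) \<psi>)"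
    using assms(4) wf_FOQ_unary_form by blast
  ultimately show ?thesis
    using assms(1-3) by (auto simp: FOQ_sentence_def padded_sentence_def)
qed

lemma sat_Q_unary_form_padding:
  assumes "1 \<le> k" "\<forall>\<psi> \<in> set \<psi>s. pureFO Sig k \<psi> \<and> fv \<psi> = {}" "w \<noteq> []"
  shows "sat bs L (w @ replicate (length w ^ k - length w) x) ((\<lambda>_. 0)(0 := length w - 1)) (\<lambda>_. {})
      (Q 1 Xs (map (unary_form (3 * k + 1)) \<psi>s)) \<longleftrightarrow>
    sat bs L w (\<lambda>_. 0) (\<lambda>_. {}) (Q k Xs \<psi>s)"
  using assms length_padding[OF assms(1)]
  by (intro sat_Q_unary_form[where Sig = Sig]) (auto simp: unary_code_def)

lemma sat_padded_sentence_iff: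
  assumes "1 \<le> k" "\<forall>\<psi> \<in> set \<psi>s. pureFO Sig k \<psi> \<and> fv \<psi> = {}"
  shows "sat bs L u (\<lambda>_. 0) (\<lambda>_. {}) (padded_sentence k x Xs \<psi>s) \<longleftrightarrow>
    (\<exists>w. w \<noteq> [] \<and> x \<notin> set w \<and> sat bs L w (\<lambda>_. 0) (\<lambda>_. {}) (Q k Xs \<psi>s) \<and>
         u = w @ replicate (length w ^ k - length w) x)"
proof -
  let ?pad = "\<lambda>w. w @ replicate (length w ^ k - length w) x"
  let ?\<nu> = "\<lambda>y. (\<lambda>_. 0)(0 := y)"
  let ?Q1 = "Q 1 Xs (map (unary_form (3 * k + 1)) \<psi>s)"
  note Q = sat_Q_unary_form_padding[OF assms, where bs = bs and L = L and x = x and Xs = Xs]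
  have "sat bs L u (\<lambda>_. 0) (\<lambda>_. {}) (padded_sentence k x Xs \<psi>s) \<longleftrightarrow>
      (\<exists>y < length u. sat bs L u (?\<nu> y) (\<lambda>_. {}) (padding_shape k x) \<and>
         sat bs L u (?\<nu> y) (\<lambda>_. {}) ?Q1)"
    by (simp add: padded_sentence_def)
  also have "\<dots> \<longleftrightarrow> (\<exists>y < length u. \<exists>w. length w = y + 1 \<and> x \<notin> set w \<and> u = ?pad w \<and>
         sat bs L u (?\<nu> y) (\<lambda>_. {}) ?Q1)"
  proof -
    have "sat bs L u (?\<nu> y) (\<lambda>_. {}) (padding_shape k x) \<longleftrightarrow>
        (\<exists>w. length w = y + 1 \<and> x \<notin> set w \<and> u = ?pad w)" if "y < length u" for y
      using sat_padding_shape[OF assms(1), of "?\<nu> y" u] that by simp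
    then show ?thesis
      by blast
  qed
  also have "\<dots> \<longleftrightarrow> (\<exists>w. w \<noteq> [] \<and> x \<notin> set w \<and> sat bs L w (\<lambda>_. 0) (\<lambda>_. {}) (Q k Xs \<psi>s) \<and>
         u = ?pad w)"
  proof
    assume "\<exists>y < length u. \<exists>w. length w = y + 1 \<and> x \<notin> set w \<and> u = ?pad w \<and>
         sat bs L u (?\<nu> y) (\<lambda>_. {}) ?Q1"
    then obtain y w where w: "length w = y + 1" "x \<notin> set w" and u: "u = ?pad w"
      and Q1: "sat bs L u (?\<nu> y) (\<lambda>_. {}) ?Q1"
      by blast
    from w(1) have "w \<noteq> []" "y = length w - 1"
      by auto
    with Q1 have "sat bs L (?pad w) (?\<nu> (length w - 1)) (\<lambda>_. {}) ?Q1"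
      by (simp only: u)
    with Q[OF \<open>w \<noteq> []\<close>] have "sat bs L w (\<lambda>_. 0) (\<lambda>_. {}) (Q k Xs \<psi>s)"
      by blast
    with w u \<open>w \<noteq> []\<close> show "\<exists>w. w \<noteq> [] \<and> x \<notin> set w \<and> sat bs L w (\<lambda>_. 0) (\<lambda>_. {}) (Q k Xs \<psi>s) \<and>
        u = ?pad w"
      by blast
  next
    assume "\<exists>w. w \<noteq> [] \<and> x \<notin> set w \<and> sat bs L w (\<lambda>_. 0) (\<lambda>_. {}) (Q k Xs \<psi>s) \<and> u = ?pad w"
    then obtain w where w: "w \<noteq> []" "x \<notin> set w" "sat bs L w (\<lambda>_. 0) (\<lambda>_. {}) (Q k Xs \<psi>s)"
      and u: "u = ?pad w"
      by blast
    then have "sat bs L u (?\<nu> (length w - 1)) (\<lambda>_. {}) ?Q1"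
      using Q[OF w(1)] by (simp only: u)
    moreover from w have "length w = (length w - 1) + 1"
      by simp
    moreover have "length w \<le> length u" "0 < length w"
      using u w(1) by auto
    then have "length w - 1 < length u"
      by linarith
    ultimately show "\<exists>y < length u. \<exists>w. length w = y + 1 \<and> x \<notin> set w \<and> u = ?pad w \<and>
         sat bs L u (?\<nu> y) (\<lambda>_. {}) ?Q1"
      using w(2) u by blast
  qed
  finally show ?thesis .
qed

lemma defines_lang_padded_sentence:
  assumes "1 \<le> k" "\<forall>\<psi> \<in> set \<psi>s. pureFO Sig k \<psi> \<and> fv \<psi> = {}"
    and "defines_lang bs L Sig (Q k Xs \<psi>s) A" "x \<notin> Sig"
  shows "defines_lang bs L (Sig \<union> {x}) (padded_sentence k x Xs \<psi>s)
      {w @ replicate (length w ^ k - length w) x | w. w \<in> A}"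
proof -
  have A: "A = {w. w \<noteq> [] \<and> set w \<subseteq> Sig \<and> sat bs L w (\<lambda>_. 0) (\<lambda>_. {}) (Q k Xs \<psi>s)}"
    using assms(3) unfolding defines_lang_def by simp
  have "u \<noteq> [] \<and> set u \<subseteq> Sig \<union> {x} \<and> sat bs L u (\<lambda>_. 0) (\<lambda>_. {}) (padded_sentence k x Xs \<psi>s)
      \<longleftrightarrow> (\<exists>w \<in> A. u = w @ replicate (length w ^ k - length w) x)" for u
  proof
    assume "u \<noteq> [] \<and> set u \<subseteq> Sig \<union> {x} \<and> sat bs L u (\<lambda>_. 0) (\<lambda>_. {}) (padded_sentence k x Xs \<psi>s)"
    then obtain w where "w \<noteq> []" "x \<notin> set w" "sat bs L w (\<lambda>_. 0) (\<lambda>_. {}) (Q k Xs \<psi>s)"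
      and "u = w @ replicate (length w ^ k - length w) x" "set u \<subseteq> Sig \<union> {x}"
      unfolding sat_padded_sentence_iff[OF assms(1,2)] by blast
    moreover from this have "set w \<subseteq> Sig"
      by auto
    ultimately show "\<exists>w \<in> A. u = w @ replicate (length w ^ k - length w) x"
      unfolding A by blast
  next
    assume "\<exists>w \<in> A. u = w @ replicate (length w ^ k - length w) x"
    then obtain w where "w \<noteq> []" "set w \<subseteq> Sig" "sat bs L w (\<lambda>_. 0) (\<lambda>_. {}) (Q k Xs \<psi>s)"
      and "u = w @ replicate (length w ^ k - length w) x"
      unfolding A by blast
    moreover from this have "x \<notin> set w" "u \<noteq> []" "set u \<subseteq> Sig \<union> {x}"
      using assms(4) by auto
    ultimately show "u \<noteq> [] \<and> set u \<subseteq> Sig \<union> {x} \<and>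
      sat bs L u (\<lambda>_. 0) (\<lambda>_. {}) (padded_sentence k x Xs \<psi>s)"
      unfolding sat_padded_sentence_iff[OF assms(1,2)] by blast
  qed
  then show ?thesis
    unfolding defines_lang_def by blast
qed

theorem proposition5p1:
  fixes bs :: "'b list" and L :: "'b list set"
    and Sig :: "'a set" and A :: "'a list set" and \<phi> :: "'a form"
    and k :: nat and sharp :: 'a
  assumes "bs \<noteq> []" and "distinct bs" and "L \<subseteq> lists (set bs)"
    and "finite Sig"
    and "k \<ge> 1"
    and "QLFO_sentence Sig (length bs) k \<phi>"
    and "defines_lang bs L Sig \<phi> A"
    and "sharp \<notin> Sig"
  shows "\<exists>\<phi>'. FOQ_sentence (Sig \<union> {sharp}) (length bs) \<phi>' \<and>
           defines_lang bs L (Sig \<union> {sharp}) \<phi>'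
             {w @ replicate (length w ^ k - length w) sharp | w. w \<in> A}"
proof -
  obtain Xs \<psi>s where \<phi>: "\<phi> = Q k Xs \<psi>s" and Xs: "Xs \<noteq> []" "distinct Xs"
    and len: "length \<psi>s = length bs - 1"
    and \<psi>s: "\<forall>\<psi> \<in> set \<psi>s. pureFO Sig k \<psi> \<and> fv \<psi> = {} \<and> frv \<psi> \<subseteq> set Xs"
    using assms(6) unfolding QLFO_sentence_def by blast
  have "\<forall>\<psi> \<in> set \<psi>s. pureFO Sig k \<psi> \<and> fv \<psi> = {}"
    using \<psi>s by blast
  then have "defines_lang bs L (Sig \<union> {sharp}) (padded_sentence k sharp Xs \<psi>s)
      {w @ replicate (length w ^ k - length w) sharp | w. w \<in> A}"
    using assms(5,7,8) \<phi> by (intro defines_lang_padded_sentence) simp_all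
  moreover have "FOQ_sentence (Sig \<union> {sharp}) (length bs) (padded_sentence k sharp Xs \<psi>s)"
    using Xs len \<psi>s by (rule FOQ_sentence_padded_sentence)
  ultimately show ?thesis
    by blast
qed

end
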